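(* For any $k \ge 2$, \[ O(k, 2k-2) = \frac{C_{k-1} + C_{(k-2)/2}}{2}, \] where $C_n = \frac{1}{n+1}\binom{2n}{n}$ for integers $n\ge 0$ and $C_n = 0$ if $n$ is not an integer. Moreover, $O(k, 2k-3) = 2E(k, 2k-2)$.
   Context: For a binary word $w = w_1\cdots w_n$, let $A = \{i : w_i = 0\}$, $|A|=a$; $G(w)$ is the permutation of $[n]$ whose first $a$ entries are the elements of $A$ in increasing order followed by the elements of $[n]\setminus A$ in increasing order. $w$ is called odd (resp. even) if $G(w)$ has an odd (resp. even) number of inversions. For $k\ge1$, $m\ge0$, $\mathcal{B}(k,m)$ is the set of binary words of length $m$ that avoid (do not contain as a not-necessarily-contiguous subsequence) every word $0^j1^{k-j}$, $j\in\{0,\dots,k\}$; $O(k,m)$ and $E(k,m)$ are the numbers of odd and even words in $\mathcal{B}(k,m)$ respectively. *)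

theory Defs
  imports Complex_Main "HOL-Library.Sublist"
begin

text \<open>Binary words are lists over nat with letters in {0,1}; positions are 1-based.\<close>

definition binword :: "nat list \<Rightarrow> bool" where
  "binword w \<longleftrightarrow> set w \<subseteq> {0, 1}"

definition G :: "nat list \<Rightarrow> nat list" where
  "G w = filter (\<lambda>i. w ! (i - 1) = 0) [1..<length w + 1]
       @ filter (\<lambda>i. w ! (i - 1) \<noteq> 0) [1..<length w + 1]"

definition inversions :: "nat list \<Rightarrow> nat" where
  "inversions p = card {(i, j). i < j \<and> j < length p \<and> p ! i > p ! j}"

definition odd_word :: "nat list \<Rightarrow> bool" where
  "odd_word w \<longleftrightarrow> odd (inversions (G w))"

definition even_word :: "nat list \<Rightarrow> bool" where
  "even_word w \<longleftrightarrow> even (inversions (G w))"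

definition B :: "nat \<Rightarrow> nat \<Rightarrow> nat list set" where
  "B k m = {w. length w = m \<and> binword w \<and>
              (\<forall>j\<in>{0..k}. \<not> subseq (replicate j 0 @ replicate (k - j) 1) w)}"

definition Ocount :: "nat \<Rightarrow> nat \<Rightarrow> nat" where
  "Ocount k m = card {w \<in> B k m. odd_word w}"

definition Ecount :: "nat \<Rightarrow> nat \<Rightarrow> nat" where
  "Ecount k m = card {w \<in> B k m. even_word w}"

definition Cat :: "real \<Rightarrow> real" where
  "Cat x = (if x \<in> \<nat> then (let n = nat \<lfloor>x\<rfloor> in real ((2 * n) choose n) / real (n + 1)) else 0)"

end

theory Submission
  imports Defs
begin

text \<open>Read 1 as an up-step and 0 as a down-step. A word avoids every 0^j 1^(k-j) iff
  zeros(u) + ones(v) < k for every factorisation w = uv. For k = n + 1 and length 2n this says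
  exactly that w is a Dyck path of semilength n; for length 2n - 1 it says that w is a Dyck path
  with its last down-step or its first up-step deleted. The inversions of G(w) are the pairs
  of a 1 followed by a 0, so the first-return decomposition w = 1u0v gives a recursion for the
  signed count S_n of Dyck paths, solved by S_n = 0 for even n > 0 and S_(2m+1) = -C_m.
  Deleting the first or last step changes the sign by (-1)^n, and the odd and even counts are
  recovered from their sum C_n and their signed difference.\<close>

definition zeros :: "nat list \<Rightarrow> nat" where
  "zeros w = length (filter (\<lambda>x. x = 0) w)"

definition ones :: "nat list \<Rightarrow> nat" where
  "ones w = length (filter (\<lambda>x. x \<noteq> 0) w)"

lemma zeros_simps [simp]:
  "zeros [] = 0"
  "zeros (x # xs) = (if x = 0 then Suc (zeros xs) else zeros xs)"
  "zeros (xs @ ys) = zeros xs + zeros ys"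
  by (auto simp: zeros_def)

lemma ones_simps [simp]:
  "ones [] = 0"
  "ones (x # xs) = (if x = 0 then ones xs else Suc (ones xs))"
  "ones (xs @ ys) = ones xs + ones ys"
  by (auto simp: ones_def)

lemma zeros_add_ones: "zeros w + ones w = length w"
  by (induction w) auto

lemma binword_Nil [simp]: "binword []"
  by (simp add: binword_def)

lemma binword_Cons [simp]: "binword (x # xs) \<longleftrightarrow> (x = 0 \<or> x = 1) \<and> binword xs"
  by (auto simp: binword_def)

lemma binword_append [simp]: "binword (xs @ ys) \<longleftrightarrow> binword xs \<and> binword ys"
  by (auto simp: binword_def)

lemma subseq_replicate_0_iff: "subseq (replicate j (0::nat)) u \<longleftrightarrow> j \<le> zeros u"
proof
  assume "subseq (replicate j (0::nat)) u"
  then have "subseq (filter (\<lambda>x. x = 0) (replicate j (0::nat))) (filter (\<lambda>x. x = 0) u)"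
    by (rule subseq_filter)
  then show "j \<le> zeros u"
    unfolding zeros_def by (auto dest: list_emb_length)
next
  assume "j \<le> zeros u"
  then have "subseq (replicate j (0::nat)) (replicate (zeros u) 0)"
    by (metis le_add_diff_inverse prefix_imp_subseq prefixI replicate_add)
  also have "replicate (zeros u) 0 = filter (\<lambda>x. x = 0) u"
    unfolding zeros_def by (rule replicate_length_same) auto
  finally show "subseq (replicate j 0) u"
    using subseq_filter_left subseq_order.order_trans by blast
qed

lemma subseq_replicate_1_iff:
  assumes "binword u"
  shows "subseq (replicate j (1::nat)) u \<longleftrightarrow> j \<le> ones u"
proof
  assume "subseq (replicate j (1::nat)) u"
  then have "subseq (filter (\<lambda>x. x \<noteq> 0) (replicate j (1::nat))) (filter (\<lambda>x. x \<noteq> 0) u)"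
    by (rule subseq_filter)
  then show "j \<le> ones u"
    unfolding ones_def by (auto dest: list_emb_length)
next
  assume "j \<le> ones u"
  then have "subseq (replicate j (1::nat)) (replicate (ones u) 1)"
    by (metis le_add_diff_inverse prefix_imp_subseq prefixI replicate_add)
  also have "replicate (ones u) 1 = filter (\<lambda>x. x \<noteq> 0) u"
    using assms unfolding ones_def binword_def by (intro replicate_length_same) auto
  finally show "subseq (replicate j 1) u"
    using subseq_filter_left subseq_order.order_trans by blast
qed

lemma B_iff_splits:
  "w \<in> B k m \<longleftrightarrow> length w = m \<and> binword w \<and> (\<forall>u v. w = u @ v \<longrightarrow> zeros u + ones v < k)"
proof -
  have "(\<exists>j\<in>{0..k}. subseq (replicate j 0 @ replicate (k - j) 1) w) \<longleftrightarrow>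
        (\<exists>u v. w = u @ v \<and> k \<le> zeros u + ones v)" if bw: "binword w"
  proof
    assume "\<exists>j\<in>{0..k}. subseq (replicate j 0 @ replicate (k - j) 1) w"
    then obtain j u v where "w = u @ v"
      "subseq (replicate j 0) u" "subseq (replicate (k - j) 1) v"
      using list_emb_appendD by blast
    moreover have "binword v" using bw \<open>w = u @ v\<close> by simp
    ultimately have "j \<le> zeros u" "k - j \<le> ones v"
      by (simp_all only: subseq_replicate_0_iff subseq_replicate_1_iff)
    then show "\<exists>u v. w = u @ v \<and> k \<le> zeros u + ones v"
      using \<open>w = u @ v\<close> by (intro exI[of _ u] exI[of _ v]) simp
  next
    assume "\<exists>u v. w = u @ v \<and> k \<le> zeros u + ones v"
    then obtain u v where uv: "w = u @ v" "k \<le> zeros u + ones v" by blast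
    define j where "j = min k (zeros u)"
    have "binword v" using bw uv by simp
    then have "subseq (replicate j 0) u" "subseq (replicate (k - j) 1) v"
      using uv(2) by (simp_all only: subseq_replicate_0_iff subseq_replicate_1_iff) (auto simp: j_def)
    then have "subseq (replicate j 0 @ replicate (k - j) 1) (u @ v)"
      by (rule list_emb_append_mono)
    then show "\<exists>j\<in>{0..k}. subseq (replicate j 0 @ replicate (k - j) 1) w"
      using uv(1) by (auto simp: j_def)
  qed
  then show ?thesis
    unfolding B_def mem_Collect_eq by (metis not_le)
qed

fun walk :: "nat \<Rightarrow> nat list \<Rightarrow> nat option" where
  "walk h [] = Some h"
| "walk h (x # xs) =
     (if x = 0 then (if h = 0 then None else walk (h - 1) xs) else walk (Suc h) xs)"

lemma walk_append:
  "walk h (xs @ ys) = (case walk h xs of None \<Rightarrow> None | Some h' \<Rightarrow> walk h' ys)"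
  by (induction xs arbitrary: h) auto

lemma all_splits_Cons_iff:
  "(\<forall>u v. x # xs = u @ v \<longrightarrow> P u) \<longleftrightarrow> P [] \<and> (\<forall>u v. xs = u @ v \<longrightarrow> P (x # u))"
  by (auto simp: Cons_eq_append_conv)

lemma walk_eq_Some_iff:
  "walk h w = Some h' \<longleftrightarrow>
     (\<forall>u v. w = u @ v \<longrightarrow> zeros u \<le> h + ones u) \<and> h' + zeros w = h + ones w"
proof (induction w arbitrary: h)
  case (Cons x xs)
  show ?case
  proof (cases "x = 0")
    case True
    show ?thesis
    proof (cases h)
      case 0
      have "\<not> (\<forall>u v. xs = u @ v \<longrightarrow> zeros (0 # u) \<le> h + ones (0 # u))"
      proof
        assume "\<forall>u v. xs = u @ v \<longrightarrow> zeros (0 # u) \<le> h + ones (0 # u)"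
        then have "zeros [0] \<le> h + ones [0]" by (metis append_Nil zeros_simps(1) ones_simps(1))
        then show False using 0 by simp
      qed
      then show ?thesis using True 0 by (simp only: all_splits_Cons_iff) simp
    next
      case (Suc h1)
      then show ?thesis using True Cons[of h1] by (simp only: all_splits_Cons_iff) auto
    qed
  next
    case False
    then show ?thesis using Cons[of "Suc h"] by (simp only: all_splits_Cons_iff) auto
  qed
qed auto

lemma walk_add: "walk h w = Some h' \<Longrightarrow> walk (h + d) w = Some (h' + d)"
proof (induction w arbitrary: h)
  case (Cons x w)
  show ?case
  proof (cases "x = 0")
    case True
    then have "0 < h" "walk (h - 1) w = Some h'" using Cons.prems by (auto split: if_splits)
    then show ?thesis using True Cons.IH[of "h - 1"] by (simp add: Suc_diff_le)
  next
    case False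
    then show ?thesis using Cons.prems Cons.IH[of "Suc h"] by simp
  qed
qed simp

lemma walk_first_return:
  assumes "walk (Suc h) w = Some h'" "h' \<le> h"
  shows "\<exists>u v. w = u @ 0 # v \<and> walk 0 u = Some 0 \<and> walk h v = Some h'"
  using assms
proof (induction "length w" arbitrary: w h rule: less_induct)
  case less
  then obtain x xs where w: "w = x # xs" by (cases w) auto
  show ?case
  proof (cases "x = 0")
    case True
    then show ?thesis using less.prems w by (intro exI[of _ "[]"] exI[of _ xs]) auto
  next
    case False
    then have "walk (Suc (Suc h)) xs = Some h'" using less.prems w by simp
    then obtain u1 v1 where 1: "xs = u1 @ 0 # v1" "walk 0 u1 = Some 0" "walk (Suc h) v1 = Some h'"
      using less.hyps[of xs "Suc h"] less.prems w by auto
    then obtain u2 v2 where 2: "v1 = u2 @ 0 # v2" "walk 0 u2 = Some 0" "walk h v2 = Some h'"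
      using less.hyps[of v1 h] less.prems w by auto
    have "walk 0 (x # u1 @ 0 # u2) = Some 0"
      using False 1 2 walk_add[of 0 u1 0 1] by (simp add: walk_append)
    then show ?thesis using w 1 2 False
      by (intro exI[of _ "x # u1 @ 0 # u2"] exI[of _ v2]) auto
  qed
qed

lemma first_return_unique:
  assumes "walk 0 u = Some 0" "walk 0 u' = Some 0" "u @ 0 # v = u' @ 0 # v'"
  shows "u = u' \<and> v = v'"
proof -
  have no_return: False if "walk 0 (p @ 0 # q) = Some 0" "walk 0 p = Some 0" for p q
    using that by (simp add: walk_append)
  from assms(3) obtain us where
    "u = u' @ us \<and> us @ 0 # v = 0 # v' \<or> u @ us = u' \<and> 0 # v = us @ 0 # v'"
    by (auto simp: append_eq_append_conv2)
  then show ?thesis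
  proof
    assume "u = u' @ us \<and> us @ 0 # v = 0 # v'"
    then show ?thesis using no_return assms by (cases us) auto
  next
    assume "u @ us = u' \<and> 0 # v = us @ 0 # v'"
    then show ?thesis using no_return assms by (cases us) auto
  qed
qed

definition paths :: "nat \<Rightarrow> nat \<Rightarrow> nat \<Rightarrow> nat list set" where
  "paths L a b = {w. length w = L \<and> binword w \<and> walk a w = Some b}"

lemma finite_paths: "finite (paths L a b)"
proof (rule finite_subset)
  show "paths L a b \<subseteq> {w. set w \<subseteq> {0, 1} \<and> length w = L}"
    by (auto simp: paths_def binword_def)
  show "finite {w. set w \<subseteq> {0::nat, 1} \<and> length w = L}"
    by (rule finite_lists_length_eq) simp
qed

lemma paths_zeros_ones: "w \<in> paths L a b \<Longrightarrow> b + zeros w = a + ones w"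
  by (simp add: paths_def walk_eq_Some_iff)

lemma dyck_zeros_ones:
  assumes "w \<in> paths (2 * n) 0 0"
  shows "zeros w = n \<and> ones w = n"
proof -
  have "zeros w = ones w" "zeros w + ones w = 2 * n"
    using paths_zeros_ones[OF assms] zeros_add_ones[of w] assms by (simp_all add: paths_def)
  then show ?thesis by linarith
qed

lemma paths_Nil: "paths 0 a b = (if a = b then {[]} else {})"
  by (auto simp: paths_def)

lemma paths_Suc:
  "paths (Suc L) a b =
     (if 0 < b then (\<lambda>w. w @ [1]) ` paths L a (b - 1) else {}) \<union>
     (\<lambda>w. w @ [0]) ` paths L a (Suc b)"
proof (intro equalityI subsetI)
  fix w assume w: "w \<in> paths (Suc L) a b"
  then obtain w' x where wx: "w = w' @ [x]"
    unfolding paths_def by (metis (mono_tags) length_Suc_conv_rev mem_Collect_eq)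
  have x: "x = 0 \<or> x = 1" and w': "length w' = L" "binword w'"
    using w wx by (auto simp: paths_def)
  obtain h where h: "walk a w' = Some h" "walk h [x] = Some b"
    using w wx by (auto simp: paths_def walk_append split: option.splits)
  show "w \<in> (if 0 < b then (\<lambda>w. w @ [1]) ` paths L a (b - 1) else {}) \<union>
             (\<lambda>w. w @ [0]) ` paths L a (Suc b)"
  proof (cases "x = 0")
    case True
    then have "h = Suc b" using h by (auto split: if_splits)
    then show ?thesis using True wx w' h by (auto simp: paths_def)
  next
    case False
    then have "x = 1" "b = Suc h" using h x by auto
    then show ?thesis using wx w' h by (auto simp: paths_def)
  qed
qed (auto simp: paths_def walk_append split: if_splits)

lemma card_paths_Suc:
  "card (paths (Suc L) a b) =
     (if 0 < b then card (paths L a (b - 1)) else 0) + card (paths L a (Suc b))"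
proof -
  have inj: "inj_on (\<lambda>w. w @ [y]) A" for y :: nat and A
    by (auto simp: inj_on_def)
  have "card (paths (Suc L) a b) =
        card (if 0 < b then (\<lambda>w. w @ [1::nat]) ` paths L a (b - 1) else {}) +
        card ((\<lambda>w. w @ [0]) ` paths L a (Suc b))"
    unfolding paths_Suc by (rule card_Un_disjoint) (auto simp: finite_paths)
  then show ?thesis by (simp add: card_image[OF inj])
qed

lemma paths_empty:
  assumes "L < b"
  shows "paths L 0 b = {}"
proof -
  have False if "w \<in> paths L 0 b" for w
    using paths_zeros_ones[OF that] zeros_add_ones[of w] that assms by (simp add: paths_def)
  then show ?thesis by blast
qed

text \<open>Ballot numbers, by Pascal's rule on the last step.\<close>

lemma card_paths_ballot:
  "card (paths (h + 2 * j) 0 h) + (if j = 0 then 0 else (h + 2 * j) choose (j - 1)) =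
   (h + 2 * j) choose j"
proof (induction "h + 2 * j" arbitrary: h j)
  case 0
  then show ?case by (simp add: paths_Nil)
next
  case (Suc M)
  have hj: "h + 2 * j = Suc M" using Suc.hyps(2) by simp
  show ?case
  proof (cases j)
    case 0
    then have h: "h = Suc M" using hj by simp
    have "card (paths M 0 (h - 1)) = 1" using Suc.hyps(1)[of "h - 1" 0] h by simp
    moreover have "paths M 0 (Suc h) = {}" using h by (intro paths_empty) simp
    ultimately show ?thesis using 0 hj h card_paths_Suc[of M 0 h] by simp
  next
    case (Suc j1)
    have M: "M = h + 2 * j1 + 1" using hj Suc by simp
    have IH_up: "card (paths M 0 (Suc h)) + (if j1 = 0 then 0 else M choose (j1 - 1)) = M choose j1"
    proof -
      have e: "Suc h + 2 * j1 = M" using M by simp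
      show ?thesis using Suc.hyps(1)[of "Suc h" j1, OF e[symmetric], unfolded e] .
    qed
    have pascal: "Suc M choose j1 = (if j1 = 0 then 0 else M choose (j1 - 1)) + (M choose j1)"
      by (cases j1) simp_all
    have "card (paths (Suc M) 0 h) + (Suc M choose j1) = Suc M choose Suc j1"
    proof (cases h)
      case 0
      have "M choose Suc j1 = M choose j1"
        using binomial_symmetric[of j1 M] M 0 by simp
      then show ?thesis using IH_up pascal 0 card_paths_Suc[of M 0 h] by simp
    next
      case (Suc h1)
      have IH_down: "card (paths M 0 h1) + (M choose j1) = M choose Suc j1"
      proof -
        have e: "h1 + 2 * Suc j1 = M" using M Suc by simp
        show ?thesis using Suc.hyps(1)[of h1 "Suc j1", OF e[symmetric], unfolded e]
          by (simp only: if_False nat.distinct diff_Suc_1)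
      qed
      show ?thesis using IH_up IH_down pascal Suc card_paths_Suc[of M 0 h] by simp
    qed
    then show ?thesis using Suc hj by simp
  qed
qed

definition catalan :: "nat \<Rightarrow> nat" where
  "catalan n = card (paths (2 * n) 0 0)"

lemma catalan_0: "catalan 0 = 1"
  by (simp add: catalan_def paths_Nil)

lemma Suc_times_catalan: "Suc n * catalan n = (2 * n) choose n"
proof (cases n)
  case (Suc m)
  have ballot: "catalan n + ((2 * n) choose m) = (2 * n) choose n"
    using card_paths_ballot[of 0 n] Suc by (simp add: catalan_def)
  have "Suc n * ((2 * n) choose m) = n * ((2 * n) choose n)"
  proof -
    have "Suc n * ((2 * n) choose m) = (2 * n) * ((2 * n - 1) choose m)"
      using binomial_absorb_comp[of "2 * n" m] Suc by (simp add: Suc_diff_le)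
    also have "\<dots> = n * ((2 * n) choose n)"
      using binomial_absorption[of m "2 * n"] Suc by simp
    finally show ?thesis .
  qed
  then show ?thesis
    using arg_cong[OF ballot, of "\<lambda>x. Suc n * x"] by (simp add: algebra_simps)
qed (simp add: catalan_0)

fun inv_rec :: "nat list \<Rightarrow> nat" where
  "inv_rec [] = 0"
| "inv_rec (x # xs) = length (filter (\<lambda>y. y < x) xs) + inv_rec xs"

lemma inversions_eq_inv_rec: "inversions p = inv_rec p"
proof (induction p)
  case Nil
  then show ?case by (simp add: inversions_def)
next
  case (Cons x xs)
  define S where "S = {(i, j). i < j \<and> j < length xs \<and> xs ! i > xs ! j}"
  define S1 where "S1 = (\<lambda>j. (0::nat, Suc j)) ` {j. j < length xs \<and> xs ! j < x}"
  define S2 where "S2 = (\<lambda>(i, j). (Suc i, Suc j)) ` S"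
  have split: "{(i, j). i < j \<and> j < length (x # xs) \<and> (x # xs) ! i > (x # xs) ! j} = S1 \<union> S2"
  proof (intro equalityI subsetI)
    fix p assume "p \<in> {(i, j). i < j \<and> j < length (x # xs) \<and> (x # xs) ! i > (x # xs) ! j}"
    then obtain i j where p: "p = (i, j)" "i < j" "j < Suc (length xs)" "(x # xs) ! i > (x # xs) ! j"
      by auto
    then obtain j' where j': "j = Suc j'" by (cases j) auto
    show "p \<in> S1 \<union> S2"
    proof (cases i)
      case 0
      then show ?thesis using p j' unfolding S1_def by auto
    next
      case (Suc i')
      then have "(i', j') \<in> S" using p j' unfolding S_def by auto
      then show ?thesis using p j' Suc unfolding S2_def by force
    qed
  qed (auto simp: S1_def S2_def S_def)
  have "finite S"
    unfolding S_def by (rule finite_subset[of _ "{..<length xs} \<times> {..<length xs}"]) auto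
  then have "card (S1 \<union> S2) = card S1 + card S2"
    by (intro card_Un_disjoint) (auto simp: S1_def S2_def)
  moreover have "card S1 = length (filter (\<lambda>y. y < x) xs)"
    unfolding S1_def by (subst card_image) (auto simp: inj_on_def length_filter_conv_card)
  moreover have "card S2 = inv_rec xs"
    unfolding S2_def using Cons by (subst card_image) (auto simp: inj_on_def S_def inversions_def)
  ultimately show ?case
    unfolding inversions_def using split by simp
qed

lemma inv_rec_snoc_max: "\<forall>y\<in>set xs. y < m \<Longrightarrow> inv_rec (xs @ [m]) = inv_rec xs"
  by (induction xs) auto

lemma inv_rec_insert_max:
  "\<forall>y\<in>set (xs @ ys). y < m \<Longrightarrow> inv_rec (xs @ m # ys) = inv_rec (xs @ ys) + length ys"
proof (induction xs)
  case Nil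
  then have "filter (\<lambda>y. y < m) ys = ys" by (auto simp: filter_id_conv)
  then show ?case by simp
qed auto

definition zero_positions :: "nat list \<Rightarrow> nat list" where
  "zero_positions w = filter (\<lambda>i. w ! (i - 1) = 0) [1..<length w + 1]"

definition one_positions :: "nat list \<Rightarrow> nat list" where
  "one_positions w = filter (\<lambda>i. w ! (i - 1) \<noteq> 0) [1..<length w + 1]"

lemma G_eq_positions: "G w = zero_positions w @ one_positions w"
  by (simp add: G_def zero_positions_def one_positions_def)

lemma zero_positions_snoc:
  "zero_positions (w @ [x]) = zero_positions w @ (if x = 0 then [Suc (length w)] else [])"
proof -
  have "filter (\<lambda>i. (w @ [x]) ! (i - 1) = 0) [1..<length w + 1] = zero_positions w"
    unfolding zero_positions_def by (rule filter_cong) (auto simp: nth_append)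
  then show ?thesis unfolding zero_positions_def by simp
qed

lemma one_positions_snoc:
  "one_positions (w @ [x]) = one_positions w @ (if x \<noteq> 0 then [Suc (length w)] else [])"
proof -
  have "filter (\<lambda>i. (w @ [x]) ! (i - 1) \<noteq> 0) [1..<length w + 1] = one_positions w"
    unfolding one_positions_def by (rule filter_cong) (auto simp: nth_append)
  then show ?thesis unfolding one_positions_def by simp
qed

lemma length_one_positions: "length (one_positions w) = ones w"
proof (induction w rule: rev_induct)
  case (snoc x w)
  then show ?case by (simp add: one_positions_snoc)
qed (simp add: one_positions_def)

lemma positions_less: "\<forall>y\<in>set (zero_positions w @ one_positions w). y < Suc (length w)"
  by (auto simp: zero_positions_def one_positions_def)

definition ginv :: "nat list \<Rightarrow> nat" where
  "ginv w = inversions (G w)"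

lemma ginv_Nil: "ginv [] = 0"
  by (simp add: ginv_def G_def inversions_def)

text \<open>A new last letter has the largest position, so a new 0 is inverted exactly with the
  earlier 1s.\<close>

lemma ginv_snoc_zero: "ginv (w @ [0]) = ginv w + ones w"
  using positions_less[of w]
  by (simp add: ginv_def G_eq_positions zero_positions_snoc one_positions_snoc
      inversions_eq_inv_rec inv_rec_insert_max length_one_positions)

lemma ginv_snoc_nonzero: "x \<noteq> 0 \<Longrightarrow> ginv (w @ [x]) = ginv w"
  using positions_less[of w] inv_rec_snoc_max[of "zero_positions w @ one_positions w"]
  by (simp add: ginv_def G_eq_positions zero_positions_snoc one_positions_snoc inversions_eq_inv_rec)

lemma ginv_append: "ginv (xs @ ys) = ginv xs + ginv ys + ones xs * zeros ys"
proof (induction ys rule: rev_induct)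
  case Nil
  then show ?case by (simp add: ginv_Nil)
next
  case (snoc y ys)
  show ?case
  proof (cases "y = 0")
    case True
    then show ?thesis using snoc ginv_snoc_zero[of "xs @ ys"] ginv_snoc_zero[of ys]
      by (simp add: algebra_simps del: append_assoc) (simp add: algebra_simps)
  next
    case False
    then show ?thesis using snoc ginv_snoc_nonzero[of y "xs @ ys"] ginv_snoc_nonzero[of y ys]
      by (simp del: append_assoc) simp
  qed
qed

lemma ginv_Cons: "ginv (x # w) = ginv w + (if x = 0 then 0 else zeros w)"
proof -
  have "ginv [x] = 0"
    using ginv_snoc_zero[of "[]"] ginv_snoc_nonzero[of x "[]"] by (cases "x = 0") (auto simp: ginv_Nil)
  then show ?thesis using ginv_append[of "[x]" w] by simp
qed

lemma first_return_bij:
  "bij_betw (\<lambda>(a, u, v). 1 # u @ 0 # v)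
     (SIGMA a:{..n}. paths (2 * a) 0 0 \<times> paths (2 * (n - a)) 0 0) (paths (2 * Suc n) 0 0)"
proof (rule bij_betwI')
  fix x y assume "x \<in> (SIGMA a:{..n}. paths (2 * a) 0 0 \<times> paths (2 * (n - a)) 0 0)"
    and "y \<in> (SIGMA a:{..n}. paths (2 * a) 0 0 \<times> paths (2 * (n - a)) 0 0)"
  then obtain a u v a' u' v' where xy: "x = (a, u, v)" "y = (a', u', v')"
    "u \<in> paths (2 * a) 0 0" "u' \<in> paths (2 * a') 0 0"
    by auto
  show "((case x of (a, u, v) \<Rightarrow> 1 # u @ 0 # v) = (case y of (a, u, v) \<Rightarrow> 1 # u @ 0 # v)) = (x = y)"
  proof
    assume "(case x of (a, u, v) \<Rightarrow> 1 # u @ 0 # v) = (case y of (a, u, v) \<Rightarrow> 1 # u @ 0 # v)"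
    then have "u = u' \<and> v = v'"
      using xy first_return_unique[of u u' v v'] by (auto simp: paths_def)
    moreover have "a = a'"
      using xy calculation by (auto simp: paths_def)
    ultimately show "x = y" using xy by simp
  qed simp
next
  fix x assume "x \<in> (SIGMA a:{..n}. paths (2 * a) 0 0 \<times> paths (2 * (n - a)) 0 0)"
  then obtain a u v where x: "x = (a, u, v)" "a \<le> n" "u \<in> paths (2 * a) 0 0"
    "v \<in> paths (2 * (n - a)) 0 0"
    by auto
  then have "walk 1 u = Some 1" using walk_add[of 0 u 0 1] by (simp add: paths_def)
  then have "walk 0 (1 # u @ 0 # v) = Some 0" using x by (simp add: walk_append paths_def)
  then show "(case x of (a, u, v) \<Rightarrow> 1 # u @ 0 # v) \<in> paths (2 * Suc n) 0 0"
    using x by (auto simp: paths_def)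
next
  fix w assume w: "w \<in> paths (2 * Suc n) 0 0"
  then obtain x xs where wx: "w = x # xs" by (cases w) (auto simp: paths_def)
  have "x = 1" "walk (Suc 0) xs = Some 0"
    using w wx by (auto simp: paths_def split: if_splits)
  then obtain u v where uv: "xs = u @ 0 # v" "walk 0 u = Some 0" "walk 0 v = Some 0"
    using walk_first_return[of 0 xs 0] by auto
  have "zeros u = ones u" using uv walk_eq_Some_iff[of 0 u 0] by auto
  then obtain a where a: "length u = 2 * a"
    using zeros_add_ones[of u] by (metis mult_2)
  have "a \<le> n" "length v = 2 * (n - a)" using w wx uv a by (auto simp: paths_def)
  then have "(a, u, v) \<in> (SIGMA a:{..n}. paths (2 * a) 0 0 \<times> paths (2 * (n - a)) 0 0)"
    using w wx uv a by (auto simp: paths_def)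
  moreover have "w = (case (a, u, v) of (a, u, v) \<Rightarrow> 1 # u @ 0 # v)"
    using wx uv \<open>x = 1\<close> by simp
  ultimately show "\<exists>x\<in>(SIGMA a:{..n}. paths (2 * a) 0 0 \<times> paths (2 * (n - a)) 0 0).
      w = (case x of (a, u, v) \<Rightarrow> 1 # u @ 0 # v)"
    by blast
qed

lemma sum_dyck_Suc:
  "(\<Sum>w\<in>paths (2 * Suc n) 0 0. f w) =
   (\<Sum>a\<le>n. \<Sum>u\<in>paths (2 * a) 0 0. \<Sum>v\<in>paths (2 * (n - a)) 0 0. f (1 # u @ 0 # v))"
proof -
  have "(\<Sum>w\<in>paths (2 * Suc n) 0 0. f w) =
        (\<Sum>x\<in>(SIGMA a:{..n}. paths (2 * a) 0 0 \<times> paths (2 * (n - a)) 0 0).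
           f (case x of (a, u, v) \<Rightarrow> 1 # u @ 0 # v))"
    using sum.reindex_bij_betw[OF first_return_bij, of f] by simp
  also have "\<dots> = (\<Sum>a\<le>n. \<Sum>p\<in>paths (2 * a) 0 0 \<times> paths (2 * (n - a)) 0 0.
                     f (case (a, p) of (a, u, v) \<Rightarrow> 1 # u @ 0 # v))"
    by (subst sum.Sigma) (auto simp: finite_paths split_beta)
  also have "\<dots> = (\<Sum>a\<le>n. \<Sum>u\<in>paths (2 * a) 0 0. \<Sum>v\<in>paths (2 * (n - a)) 0 0. f (1 # u @ 0 # v))"
    by (rule sum.cong[OF refl], subst sum.cartesian_product) (simp add: case_prod_beta)
  finally show ?thesis .
qed

lemma catalan_Suc: "catalan (Suc n) = (\<Sum>a\<le>n. catalan a * catalan (n - a))"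
proof -
  have "catalan (Suc n) = (\<Sum>w\<in>paths (2 * Suc n) 0 0. 1)"
    by (simp add: catalan_def)
  also have "\<dots> = (\<Sum>a\<le>n. \<Sum>u\<in>paths (2 * a) 0 0. \<Sum>v\<in>paths (2 * (n - a)) 0 0. 1)"
    by (rule sum_dyck_Suc)
  finally show ?thesis by (simp add: catalan_def)
qed

definition sgn_word :: "nat list \<Rightarrow> int" where
  "sgn_word w = (-1) ^ ginv w"

definition dyck_sign :: "nat \<Rightarrow> int" where
  "dyck_sign n = (\<Sum>w\<in>paths (2 * n) 0 0. sgn_word w)"

lemma dyck_sign_0: "dyck_sign 0 = 1"
  by (simp add: dyck_sign_def paths_Nil sgn_word_def ginv_Nil)

lemma sgn_word_first_return:
  assumes "u \<in> paths (2 * a) 0 0" "v \<in> paths (2 * b) 0 0"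
  shows "sgn_word (1 # u @ 0 # v) = - ((-1) ^ ((a + 1) * b) * sgn_word u * sgn_word v)"
proof -
  have "ginv (1 # u @ 0 # v) = ginv u + ginv v + (a + 1) * b + 2 * a + 1"
    using dyck_zeros_ones[OF assms(1)] dyck_zeros_ones[OF assms(2)]
      ginv_Cons[of 1 "u @ 0 # v"] ginv_append[of u "0 # v"] ginv_Cons[of 0 v]
    by (simp add: algebra_simps)
  then show ?thesis
    by (simp add: sgn_word_def power_add power_mult)
qed

lemma dyck_sign_Suc:
  "dyck_sign (Suc n) = - (\<Sum>a\<le>n. (-1) ^ ((a + 1) * (n - a)) * dyck_sign a * dyck_sign (n - a))"
proof -
  have sum_scaled_product: "(\<Sum>u\<in>U. \<Sum>v\<in>V. - (c * f u * g v)) = - (c * sum f U * sum g V)"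
    for c :: int and U V :: "nat list set" and f g
    by (simp add: sum_negf sum_distrib_left sum_distrib_right algebra_simps)
  have "dyck_sign (Suc n) =
        (\<Sum>a\<le>n. \<Sum>u\<in>paths (2 * a) 0 0. \<Sum>v\<in>paths (2 * (n - a)) 0 0.
           - ((-1) ^ ((a + 1) * (n - a)) * sgn_word u * sgn_word v))"
    unfolding dyck_sign_def sum_dyck_Suc by (intro sum.cong refl sgn_word_first_return)
  also have "\<dots> = (\<Sum>a\<le>n. - ((-1) ^ ((a + 1) * (n - a)) * dyck_sign a * dyck_sign (n - a)))"
    unfolding dyck_sign_def
    by (intro sum.cong refl sum_scaled_product)
  finally show ?thesis by (simp add: sum_negf)
qed

lemma sum_atMost_double_split:
  "(\<Sum>a\<le>2 * m. f a) = (\<Sum>i<m. f (2 * i + 1)) + (\<Sum>i\<le>m. f (2 * i :: nat))"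
proof (induction m)
  case (Suc m)
  have "(\<Sum>a\<le>2 * Suc m. f a) = (\<Sum>a\<le>2 * m. f a) + f (2 * m + 1) + f (2 * m + 2)"
    by (simp add: atMost_Suc add_ac)
  then show ?case using Suc by (simp add: atMost_Suc lessThan_Suc algebra_simps)
qed simp

lemma sum_atMost_Suc_double_split:
  "(\<Sum>a\<le>2 * m + 1. f a) = (\<Sum>i\<le>m. f (2 * i + 1)) + (\<Sum>i\<le>m. f (2 * i :: nat))"
  using sum_atMost_double_split[of f m]
  by (simp add: lessThan_Suc_atMost[symmetric] add_ac)

definition signed_catalan :: "nat \<Rightarrow> int" where
  "signed_catalan j =
     (if j = 0 then 1 else if even j then 0 else - int (catalan ((j - 1) div 2)))"

lemma signed_catalan_odd [simp]: "signed_catalan (Suc (2 * i)) = - int (catalan i)"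
  by (simp add: signed_catalan_def)

lemma signed_catalan_even: "0 < i \<Longrightarrow> signed_catalan (2 * i) = 0"
  by (simp add: signed_catalan_def)

text \<open>For even n only the products of two odd-index terms survive, and they add up by the
  Catalan recursion; for odd n the two surviving terms cancel.\<close>

lemma signed_catalan_Suc:
  "signed_catalan (Suc n) =
   - (\<Sum>a\<le>n. (-1) ^ ((a + 1) * (n - a)) * signed_catalan a * signed_catalan (n - a))"
proof -
  define t where "t a = (-1::int) ^ ((a + 1) * (n - a)) * signed_catalan a * signed_catalan (n - a)"
    for a
  have "(\<Sum>a\<le>n. t a) = - signed_catalan (Suc n)"
  proof (cases "even n")
    case True
    then obtain m where n: "n = 2 * m" by auto
    have odd_terms: "t (2 * i + 1) = int (catalan i) * int (catalan (m - 1 - i))" if "i < m" for i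
    proof -
      have "n - (2 * i + 1) = 2 * (m - 1 - i) + 1" using that n by simp
      moreover have "(2 * i + 1 + 1) * (n - (2 * i + 1)) = 2 * ((i + 1) * (n - (2 * i + 1)))"
        by simp
      ultimately show ?thesis unfolding t_def by (simp only: power_mult) simp
    qed
    have even_terms: "t (2 * i) = (if m = 0 then 1 else 0)" if "i \<le> m" for i
    proof (cases "m = 0")
      case True
      then show ?thesis using that n by (simp add: t_def signed_catalan_def)
    next
      case False
      then have "signed_catalan (2 * i) = 0 \<or> signed_catalan (n - 2 * i) = 0"
        using n signed_catalan_even[of i] signed_catalan_even[of m] by (cases "i = 0") auto
      then show ?thesis using False by (auto simp: t_def)
    qed
    have "(\<Sum>a\<le>n. t a) = (\<Sum>i<m. t (2 * i + 1)) + (\<Sum>i\<le>m. t (2 * i))"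
      unfolding n by (rule sum_atMost_double_split)
    also have "\<dots> = (\<Sum>i<m. int (catalan i) * int (catalan (m - 1 - i))) + (if m = 0 then 1 else 0)"
      using odd_terms even_terms by simp
    also have "\<dots> = int (catalan m)"
    proof (cases m)
      case (Suc m')
      then have "(\<Sum>i<m. int (catalan i) * int (catalan (m - 1 - i))) =
                 (\<Sum>i\<le>m'. int (catalan i * catalan (m' - i)))"
        using lessThan_Suc_atMost by simp
      then show ?thesis using Suc catalan_Suc[of m'] by simp
    qed (simp add: catalan_0)
    finally show ?thesis using n by simp
  next
    case False
    then obtain m where n: "n = 2 * m + 1" using oddE by blast
    have odd_terms: "t (2 * i + 1) = (if i = m then signed_catalan n else 0)" if "i \<le> m" for i
    proof (cases "i = m")
      case False
      then have "n - (2 * i + 1) = 2 * (m - i)" "0 < m - i" using n that by auto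
      then show ?thesis using False signed_catalan_even[of "m - i"] by (simp add: t_def)
    qed (simp add: t_def n signed_catalan_def)
    have even_terms: "t (2 * i) = (if i = 0 then - signed_catalan n else 0)" if "i \<le> m" for i
      using n signed_catalan_even[of i] by (cases "i = 0") (auto simp: t_def signed_catalan_def)
    have "(\<Sum>a\<le>n. t a) = (\<Sum>i\<le>m. t (2 * i + 1)) + (\<Sum>i\<le>m. t (2 * i))"
      unfolding n by (rule sum_atMost_Suc_double_split)
    also have "\<dots> = 0"
      using odd_terms even_terms by simp
    finally show ?thesis using n by (simp add: signed_catalan_def)
  qed
  then show ?thesis by (simp add: t_def)
qed

lemma dyck_sign_eq_signed_catalan: "dyck_sign n = signed_catalan n"
proof (induction n rule: less_induct)
  case (less n)
  show ?case
  proof (cases n)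
    case 0
    then show ?thesis by (simp add: dyck_sign_0 signed_catalan_def)
  next
    case (Suc m)
    have "dyck_sign n = - (\<Sum>a\<le>m. (-1) ^ ((a + 1) * (m - a)) * dyck_sign a * dyck_sign (m - a))"
      unfolding Suc by (rule dyck_sign_Suc)
    also have "\<dots> =
      - (\<Sum>a\<le>m. (-1) ^ ((a + 1) * (m - a)) * signed_catalan a * signed_catalan (m - a))"
      using less Suc by (intro arg_cong[where f = uminus] sum.cong) auto
    finally show ?thesis using Suc signed_catalan_Suc by simp
  qed
qed

lemma B_Suc_double: "B (Suc n) (2 * n) = paths (2 * n) 0 0"
proof (intro equalityI subsetI)
  fix w assume "w \<in> B (Suc n) (2 * n)"
  then have w: "length w = 2 * n" "binword w" "\<And>u v. w = u @ v \<Longrightarrow> zeros u + ones v < Suc n"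
    by (simp_all add: B_iff_splits)
  have "ones w \<le> n" "zeros w \<le> n" using w(3)[of "[]" w] w(3)[of w "[]"] by simp_all
  then have e: "zeros w = n" "ones w = n" using zeros_add_ones[of w] w(1) by auto
  moreover have "zeros u \<le> ones u" if "w = u @ v" for u v
    using w(3)[OF that] e that by simp
  ultimately have "walk 0 w = Some 0"
    by (simp add: walk_eq_Some_iff)
  then show "w \<in> paths (2 * n) 0 0" using w by (simp add: paths_def)
next
  fix w assume w: "w \<in> paths (2 * n) 0 0"
  then have e: "zeros w = n" "ones w = n" using dyck_zeros_ones by auto
  have "zeros u + ones v < Suc n" if "w = u @ v" for u v
  proof -
    have "zeros u \<le> ones u" using w that by (auto simp: paths_def walk_eq_Some_iff)
    then show ?thesis using e that by simp
  qed
  then show "w \<in> B (Suc n) (2 * n)"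
    using w unfolding B_iff_splits by (auto simp: paths_def)
qed

lemma B_Suc_double_minus_1:
  assumes "0 < n"
  shows "B (Suc n) (2 * n - 1) = paths (2 * n - 1) 0 1 \<union> paths (2 * n - 1) 1 0"
proof (intro equalityI subsetI)
  fix w assume "w \<in> B (Suc n) (2 * n - 1)"
  then have w: "length w = 2 * n - 1" "binword w" "\<And>u v. w = u @ v \<Longrightarrow> zeros u + ones v < Suc n"
    by (simp_all add: B_iff_splits)
  have "ones w \<le> n" "zeros w \<le> n" using w(3)[of "[]" w] w(3)[of w "[]"] by simp_all
  moreover have "zeros w + ones w = 2 * n - 1" using zeros_add_ones[of w] w(1) by simp
  ultimately consider "ones w = n" "zeros w = n - 1" | "zeros w = n" "ones w = n - 1"
    using assms by linarith
  then show "w \<in> paths (2 * n - 1) 0 1 \<union> paths (2 * n - 1) 1 0"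
  proof cases
    case 1
    moreover have "zeros u \<le> ones u" if "w = u @ v" for u v
      using w(3)[OF that] 1 that by simp
    ultimately have "walk 0 w = Some 1"
      using assms by (simp add: walk_eq_Some_iff)
    then show ?thesis using w by (simp add: paths_def)
  next
    case 2
    moreover have "zeros u \<le> 1 + ones u" if "w = u @ v" for u v
      using w(3)[OF that] 2 that assms by simp
    ultimately have "walk 1 w = Some 0"
      using assms by (simp add: walk_eq_Some_iff)
    then show ?thesis using w by (simp add: paths_def)
  qed
next
  fix w assume w: "w \<in> paths (2 * n - 1) 0 1 \<union> paths (2 * n - 1) 1 0"
  then have len: "length w = 2 * n - 1" "binword w" "zeros w + ones w = 2 * n - 1"
    using zeros_add_ones[of w] by (auto simp: paths_def)
  have "zeros u + ones v < Suc n" if "w = u @ v" for u v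
  proof (cases "w \<in> paths (2 * n - 1) 0 1")
    case True
    then have "zeros u \<le> ones u" "1 + zeros w = ones w"
      using that by (auto simp: paths_def walk_eq_Some_iff)
    then show ?thesis using len that assms by simp
  next
    case False
    then have "zeros u \<le> 1 + ones u" "zeros w = 1 + ones w"
      using w that by (auto simp: paths_def walk_eq_Some_iff)
    then show ?thesis using len that assms by simp
  qed
  then show "w \<in> B (Suc n) (2 * n - 1)"
    using len unfolding B_iff_splits by auto
qed

lemma paths_Suc_from_0: "paths (Suc L) 0 b = (\<lambda>w. 1 # w) ` paths L 1 b"
proof (intro equalityI subsetI)
  fix w assume w: "w \<in> paths (Suc L) 0 b"
  then obtain x xs where "w = x # xs" by (cases w) (auto simp: paths_def)
  then show "w \<in> (\<lambda>w. 1 # w) ` paths L 1 b"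
    using w by (auto simp: paths_def split: if_splits)
qed (auto simp: paths_def)

lemma dyck_eq_snoc_0: "0 < n \<Longrightarrow> paths (2 * n) 0 0 = (\<lambda>w. w @ [0]) ` paths (2 * n - 1) 0 1"
  using paths_Suc[of "2 * n - 1" 0 0] by simp

lemma dyck_eq_Cons_1: "0 < n \<Longrightarrow> paths (2 * n) 0 0 = (\<lambda>w. 1 # w) ` paths (2 * n - 1) 1 0"
  using paths_Suc_from_0[of "2 * n - 1" 0] by simp

lemma card_paths_to_1: "0 < n \<Longrightarrow> card (paths (2 * n - 1) 0 1) = catalan n"
  unfolding catalan_def by (subst dyck_eq_snoc_0) (auto intro!: card_image[symmetric] inj_onI)

lemma card_paths_from_1: "0 < n \<Longrightarrow> card (paths (2 * n - 1) 1 0) = catalan n"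
  unfolding catalan_def by (subst dyck_eq_Cons_1) (auto intro!: card_image[symmetric] inj_onI)

text \<open>Appending the last down-step, or prepending the first up-step, adds n to \<open>ginv\<close>.\<close>

lemma sum_sgn_paths_to_1:
  assumes "0 < n"
  shows "(\<Sum>w\<in>paths (2 * n - 1) 0 1. sgn_word w) = (-1) ^ n * dyck_sign n"
proof -
  have "ones w = n" if "w \<in> paths (2 * n - 1) 0 1" for w
    using paths_zeros_ones[OF that] zeros_add_ones[of w] that assms by (simp add: paths_def)
  then have "dyck_sign n = (\<Sum>w\<in>paths (2 * n - 1) 0 1. (-1) ^ n * sgn_word w)"
    unfolding dyck_sign_def dyck_eq_snoc_0[OF assms]
    by (subst sum.reindex) (auto intro: inj_onI simp: sgn_word_def ginv_snoc_zero power_add mult.commute)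
  then show ?thesis by (simp add: sum_distrib_left[symmetric])
qed

lemma sum_sgn_paths_from_1:
  assumes "0 < n"
  shows "(\<Sum>w\<in>paths (2 * n - 1) 1 0. sgn_word w) = (-1) ^ n * dyck_sign n"
proof -
  have "zeros w = n" if "w \<in> paths (2 * n - 1) 1 0" for w
    using paths_zeros_ones[OF that] zeros_add_ones[of w] that assms by (simp add: paths_def)
  then have "dyck_sign n = (\<Sum>w\<in>paths (2 * n - 1) 1 0. (-1) ^ n * sgn_word w)"
    unfolding dyck_sign_def dyck_eq_Cons_1[OF assms]
    by (subst sum.reindex) (auto intro: inj_onI simp: sgn_word_def ginv_Cons power_add mult.commute)
  then show ?thesis by (simp add: sum_distrib_left[symmetric])
qed

lemma card_even_odd_words:
  assumes "finite S"
  shows "int (card {w \<in> S. even_word w}) - int (card {w \<in> S. odd_word w}) = (\<Sum>w\<in>S. sgn_word w)"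
    and "card {w \<in> S. even_word w} + card {w \<in> S. odd_word w} = card S"
proof -
  have odd_iff: "odd_word w \<longleftrightarrow> \<not> even_word w" for w
    by (simp add: odd_word_def even_word_def)
  have "sgn_word w = (if even_word w then 1 else -1)" for w
    by (simp add: sgn_word_def even_word_def ginv_def)
  then show "int (card {w \<in> S. even_word w}) - int (card {w \<in> S. odd_word w}) = (\<Sum>w\<in>S. sgn_word w)"
    using assms by (simp add: sum.If_cases odd_iff Int_def)
  have "card S = card ({w \<in> S. even_word w} \<union> {w \<in> S. odd_word w})"
    by (rule arg_cong[where f = card]) (auto simp: odd_iff)
  also have "\<dots> = card {w \<in> S. even_word w} + card {w \<in> S. odd_word w}"
    using assms by (intro card_Un_disjoint) (auto simp: odd_iff)
  finally show "card {w \<in> S. even_word w} + card {w \<in> S. odd_word w} = card S" ..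
qed

lemma Ecount_Ocount_double:
  "int (Ecount (Suc n) (2 * n)) - int (Ocount (Suc n) (2 * n)) = dyck_sign n"
  "Ecount (Suc n) (2 * n) + Ocount (Suc n) (2 * n) = catalan n"
  using card_even_odd_words[OF finite_paths, of "2 * n" 0 0]
  by (simp_all add: Ecount_def Ocount_def B_Suc_double dyck_sign_def catalan_def)

lemma Ecount_Ocount_double_minus_1:
  assumes "0 < n"
  shows "int (Ecount (Suc n) (2 * n - 1)) - int (Ocount (Suc n) (2 * n - 1)) =
           2 * (-1) ^ n * dyck_sign n"
    and "Ecount (Suc n) (2 * n - 1) + Ocount (Suc n) (2 * n - 1) = 2 * catalan n"
proof -
  have disjoint: "paths L 0 1 \<inter> paths L 1 0 = {}" for L
  proof -
    have False if "w \<in> paths L 0 1" "w \<in> paths L 1 0" for w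
      using paths_zeros_ones[OF that(1)] paths_zeros_ones[OF that(2)] by simp
    then show ?thesis by blast
  qed
  have fin: "finite (paths (2 * n - 1) 0 1 \<union> paths (2 * n - 1) 1 0)"
    by (simp add: finite_paths)
  show "int (Ecount (Suc n) (2 * n - 1)) - int (Ocount (Suc n) (2 * n - 1)) =
          2 * (-1) ^ n * dyck_sign n"
    unfolding Ecount_def Ocount_def B_Suc_double_minus_1[OF assms] card_even_odd_words(1)[OF fin]
      sum.union_disjoint[OF finite_paths finite_paths disjoint]
      sum_sgn_paths_to_1[OF assms] sum_sgn_paths_from_1[OF assms]
    by simp
  show "Ecount (Suc n) (2 * n - 1) + Ocount (Suc n) (2 * n - 1) = 2 * catalan n"
    unfolding Ecount_def Ocount_def B_Suc_double_minus_1[OF assms] card_even_odd_words(2)[OF fin]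
      card_Un_disjoint[OF finite_paths finite_paths disjoint]
      card_paths_to_1[OF assms] card_paths_from_1[OF assms]
    by simp
qed

lemma dyck_sign_even: "0 < n \<Longrightarrow> even n \<Longrightarrow> dyck_sign n = 0"
  by (simp add: dyck_sign_eq_signed_catalan signed_catalan_def)

lemma Cat_of_nat: "Cat (real n) = real (catalan n)"
  using Suc_times_catalan[of n] by (simp add: Cat_def field_simps flip: of_nat_mult)

lemma dyck_sign_eq_Cat:
  assumes "0 < n"
  shows "real_of_int (dyck_sign n) = - Cat ((real n - 1) / 2)"
proof (cases "even n")
  case True
  have "(real n - 1) / 2 \<notin> \<nat>"
  proof
    assume "(real n - 1) / 2 \<in> \<nat>"
    then obtain j where "(real n - 1) / 2 = real j" by (auto elim: Nats_cases)
    then have "real n = real (2 * j + 1)" by simp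
    then have "n = 2 * j + 1" by (simp only: of_nat_eq_iff)
    then show False using True by simp
  qed
  then show ?thesis using dyck_sign_even[OF assms True] by (simp add: Cat_def)
next
  case False
  then obtain m where n: "n = 2 * m + 1" using oddE by blast
  then have "(real n - 1) / 2 = real m" by simp
  then show ?thesis using n by (simp add: dyck_sign_eq_signed_catalan Cat_of_nat)
qed

theorem proposition4p2:
  fixes k :: nat
  assumes "k \<ge> 2"
  shows "real (Ocount k (2 * k - 2)) = (Cat (real k - 1) + Cat ((real k - 2) / 2)) / 2
         \<and> Ocount k (2 * k - 3) = 2 * Ecount k (2 * k - 2)"
proof -
  define n where "n = k - 1"
  have n: "0 < n" "k = Suc n" "2 * k - 2 = 2 * n" "2 * k - 3 = 2 * n - 1"
    using assms by (auto simp: n_def)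
  note even_length = Ecount_Ocount_double[of n, folded n(2)]
  note odd_length = Ecount_Ocount_double_minus_1[OF n(1), folded n(2)]
  have "2 * int (Ocount k (2 * n)) = int (catalan n) - dyck_sign n"
    using even_length by linarith
  then have "real (Ocount k (2 * n)) = (real (catalan n) - real_of_int (dyck_sign n)) / 2"
    using arg_cong[where f = real_of_int] by fastforce
  also have "\<dots> = (Cat (real k - 1) + Cat ((real k - 2) / 2)) / 2"
    using dyck_sign_eq_Cat[OF n(1)] Cat_of_nat[of n] n(2) by (simp add: add_diff_eq diff_diff_eq)
  finally have part1: "real (Ocount k (2 * n)) = (Cat (real k - 1) + Cat ((real k - 2) / 2)) / 2" .
  have "(-1) ^ n * dyck_sign n = - dyck_sign n"
    using dyck_sign_even[OF n(1)] by (cases "even n") auto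
  then have "Ocount k (2 * n - 1) = 2 * Ecount k (2 * n)"
    using even_length odd_length by linarith
  with part1 show ?thesis
    unfolding n(3,4) by blast
qed

end
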